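(* Let $G=(V,E)$ be a multigraph with $n$ vertices and $m$ edges. Consider a process that performs $n-1$ edge contractions, with arbitrarily many edge deletions allowed between consecutive contractions; let $G_k$ denote the graph just before the $k$-th contraction (so $G_1=G$ if no deletions precede it), and let $u_kv_k$ be the edge of $G_k$ contracted at step $k$, for $k\in[n-1]$. Suppose that for some $\alpha>0$, the cost of the $k$-th contraction is at most $\alpha\cdot\min\{\deg_{G_k}(u_k),\deg_{G_k}(v_k)\}$ for every $k$. Then the total cost of all contractions is $O(\alpha m\log n)$; equivalently, $\sum_{k=1}^{n-1}\min\{\deg_{G_k}(u_k),\deg_{G_k}(v_k)\}=O(m\log n)$.
   Context: Contracting an edge $uv$ identifies $u$ and $v$ into a single vertex and removes the edges between $u$ and $v$; other edges (possibly becoming parallel) are kept with endpoints updated. Degrees count incident edges with multiplicity. *)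

theory Defs
  imports Complex_Main "HOL-Library.Multiset"
begin

text \<open>A finite loopless multigraph on vertex set V: edges form a multiset of
  2-element vertex sets (parallel edges = repeated elements).\<close>
definition multigraph :: "nat set \<Rightarrow> nat set multiset \<Rightarrow> bool" where
  "multigraph V E \<longleftrightarrow> finite V \<and> (\<forall>e \<in># E. e \<subseteq> V \<and> card e = 2)"

definition deg :: "nat set multiset \<Rightarrow> nat \<Rightarrow> nat" where
  "deg E x = size (filter_mset (\<lambda>e. x \<in> e) E)"

definition contract :: "nat set multiset \<Rightarrow> nat \<Rightarrow> nat \<Rightarrow> nat set multiset" where
  "contract E u v = image_mset ((`) (\<lambda>x. if x = v then u else x))
                      (filter_mset (\<lambda>e. e \<noteq> {u, v}) E)"

text \<open>A process of card V - 1 contractions with arbitrary edge deletions in between.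
  (VS k, ES k) is the graph G_k just before the k-th contraction, k = 1..n-1,
  and {us k, vs k} is the edge contracted at step k.\<close>
definition contraction_process ::
  "nat set \<Rightarrow> nat set multiset \<Rightarrow> (nat \<Rightarrow> nat set) \<Rightarrow> (nat \<Rightarrow> nat set multiset)
     \<Rightarrow> (nat \<Rightarrow> nat) \<Rightarrow> (nat \<Rightarrow> nat) \<Rightarrow> bool" where
  "contraction_process V E VS ES us vs \<longleftrightarrow>
     VS 1 = V \<and> ES 1 \<subseteq># E \<and>
     (\<forall>k \<in> {1..<card V}.
        us k \<noteq> vs k \<and> {us k, vs k} \<in># ES k \<and>
        (k + 1 < card V \<longrightarrow>
           VS (k + 1) = VS k - {vs k} \<and>
           ES (k + 1) \<subseteq># contract (ES k) (us k) (vs k)))"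

end

theory Submission
  imports Defs
begin

text \<open>Give a vertex x whose cluster contains s x of the n original vertices the potential
  log n - log (s x), and an edge the potential 1 plus that of its endpoints.  Contracting uv
  deletes the u-v edges, each of potential at least 1, and at least doubles the cluster of the
  endpoint with the smaller cluster, so every other edge at that endpoint loses at least 1.
  Hence a contraction costing min(deg u, deg v) lowers the total potential by at least that
  much; edge deletions never raise it, and it starts at m (1 + 2 log n).\<close>

definition cluster_pot :: "nat \<Rightarrow> nat \<Rightarrow> real" where
  "cluster_pot n t = log 2 (real n) - log 2 (real t)"

definition edge_pot :: "nat \<Rightarrow> (nat \<Rightarrow> nat) \<Rightarrow> nat set \<Rightarrow> real" where
  "edge_pot n s e = 1 + (\<Sum>x\<in>e. cluster_pot n (s x))"

definition graph_pot :: "nat \<Rightarrow> (nat \<Rightarrow> nat) \<Rightarrow> nat set multiset \<Rightarrow> real" where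
  "graph_pot n s F = (\<Sum>e\<in>#F. edge_pot n s e)"

lemma cluster_pot_nonneg: "1 \<le> t \<Longrightarrow> t \<le> n \<Longrightarrow> 0 \<le> cluster_pot n t"
  unfolding cluster_pot_def by simp

lemma cluster_pot_antimono: "0 < a \<Longrightarrow> a \<le> b \<Longrightarrow> cluster_pot n b \<le> cluster_pot n a"
  unfolding cluster_pot_def by simp

lemma cluster_pot_add_larger:
  assumes "0 < a" "a \<le> b"
  shows "cluster_pot n (a + b) \<le> cluster_pot n a - 1"
proof -
  have "log 2 (2 * real a) \<le> log 2 (real (a + b))" using assms by simp
  moreover have "log 2 (2 * real a) = 1 + log 2 (real a)" using assms by (simp add: log_mult)
  ultimately show ?thesis unfolding cluster_pot_def by simp
qed

lemma edge_pot_ge_1: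
  assumes "finite e" "\<forall>x\<in>e. 1 \<le> s x \<and> s x \<le> n"
  shows "1 \<le> edge_pot n s e"
proof -
  have "0 \<le> (\<Sum>x\<in>e. cluster_pot n (s x))"
    using assms by (intro sum_nonneg) (auto intro: cluster_pot_nonneg)
  then show ?thesis unfolding edge_pot_def by simp
qed

lemma edge_pot_merge:
  assumes "card e = 2" "e \<noteq> {u, v}" "u \<noteq> v" "1 \<le> s u" "1 \<le> s v"
    and w: "w = (if s u \<le> s v then u else v)"
  shows "edge_pot n (s(u := s u + s v)) ((\<lambda>x. if x = v then u else x) ` e)
           + (if w \<in> e then 1 else 0) \<le> edge_pot n s e"
proof -
  let ?s' = "s(u := s u + s v)"
  obtain a b where ab: "e = {a, b}" "a \<noteq> b" using assms(1) card_2_iff by metis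
  have merged_u: "cluster_pot n (?s' u) \<le> cluster_pot n (s u) - (if w = u then 1 else 0)"
    using cluster_pot_add_larger[of "s u" "s v" n] cluster_pot_antimono[of "s u" "s u + s v" n]
      assms(3,4) w by auto
  have merged_v: "cluster_pot n (?s' u) \<le> cluster_pot n (s v) - (if w = v then 1 else 0)"
    using cluster_pot_add_larger[of "s v" "s u" n] cluster_pot_antimono[of "s v" "s u + s v" n]
      assms(3,5) w by (auto simp: add.commute)
  consider (at_u) c where "e = {u, c}" "c \<noteq> u" "c \<noteq> v"
    | (at_v) c where "e = {v, c}" "c \<noteq> u" "c \<noteq> v"
    | (away) "u \<notin> e" "v \<notin> e"
    using ab assms(2) by blast
  then show ?thesis
  proof cases
    case at_u
    then have "(\<lambda>x. if x = v then u else x) ` e = e" by auto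
    then show ?thesis using at_u merged_u assms(3) w unfolding edge_pot_def by auto
  next
    case at_v
    then have "(\<lambda>x. if x = v then u else x) ` e = {u, c}" by auto
    then show ?thesis using at_v merged_v assms(3) w unfolding edge_pot_def by auto
  next
    case away
    then have "(\<lambda>x. if x = v then u else x) ` e = e" by auto
    moreover have "(\<Sum>x\<in>e. cluster_pot n (?s' x)) = (\<Sum>x\<in>e. cluster_pot n (s x))"
      using away by (intro sum.cong) auto
    ultimately show ?thesis using away w unfolding edge_pot_def by auto
  qed
qed

lemma size_filter_mset_as_sum:
  "real (size {#x \<in># M. P x#}) = (\<Sum>x\<in>#M. if P x then 1 else 0)"
  by (induction M) auto

lemma graph_pot_union: "graph_pot n s (A + B) = graph_pot n s A + graph_pot n s B"
  unfolding graph_pot_def by simp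

lemma size_le_graph_pot:
  assumes "\<forall>e\<in>#F. 1 \<le> edge_pot n s e"
  shows "real (size F) \<le> graph_pot n s F"
proof -
  have "(\<Sum>e\<in>#F. (1::real)) \<le> graph_pot n s F"
    unfolding graph_pot_def using assms by (intro sum_mset_mono) auto
  then show ?thesis by simp
qed

lemma graph_pot_subset_mono:
  assumes "F' \<subseteq># F" "\<forall>e\<in>#F. 0 \<le> edge_pot n s e"
  shows "graph_pot n s F' \<le> graph_pot n s F"
proof -
  obtain H where H: "F = F' + H" using assms(1) by (auto simp: subset_mset.le_iff_add)
  have "(\<Sum>e\<in>#H. 0) \<le> graph_pot n s H"
    unfolding graph_pot_def using assms(2) H by (intro sum_mset_mono) auto
  then show ?thesis using H unfolding graph_pot_def by simp
qed

lemma graph_pot_const_1: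
  assumes "\<forall>e\<in>#F. card e = 2"
  shows "graph_pot n (\<lambda>_. 1) F = real (size F) * (1 + 2 * log 2 (real n))"
proof -
  have "graph_pot n (\<lambda>_. 1) F = (\<Sum>e\<in>#F. 1 + 2 * log 2 (real n))"
    unfolding graph_pot_def using assms
    by (intro arg_cong[where f = sum_mset] image_mset_cong) (simp add: edge_pot_def cluster_pot_def)
  then show ?thesis by simp
qed

lemma deg_eq_size_other_edges_add_count:
  assumes "x \<in> {u, v}"
  shows "deg F x = size {#e \<in># F. e \<noteq> {u, v} \<and> x \<in> e#} + count F {u, v}"
proof -
  have "{#e \<in># F. x \<in> e \<and> e = {u, v}#} = {#e \<in># F. e = {u, v}#}"
    using assms by (intro filter_mset_cong) auto
  then have "size {#e \<in># F. x \<in> e \<and> e = {u, v}#} = count F {u, v}"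
    by (simp add: filter_eq_replicate_mset)
  moreover have "{#e \<in># F. x \<in> e#}
      = {#e \<in># F. e \<noteq> {u, v} \<and> x \<in> e#} + {#e \<in># F. x \<in> e \<and> e = {u, v}#}"
    by (subst multiset_partition[of _ "\<lambda>e. e \<noteq> {u, v}"]) (simp add: filter_filter_mset conj_commute)
  ultimately show ?thesis unfolding deg_def by simp
qed

lemma graph_pot_contract:
  assumes edges: "\<forall>e\<in>#F. card e = 2" and "u \<noteq> v" "1 \<le> s u" "1 \<le> s v"
    and w: "w = (if s u \<le> s v then u else v)"
  shows "graph_pot n (s(u := s u + s v)) (contract F u v) + size {#e \<in># F. e \<noteq> {u, v} \<and> w \<in> e#}
           \<le> graph_pot n s {#e \<in># F. e \<noteq> {u, v}#}"
proof -
  let ?f = "\<lambda>x. if x = v then u else x"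
  let ?other = "{#e \<in># F. e \<noteq> {u, v}#}"
  have "graph_pot n (s(u := s u + s v)) (contract F u v) + size {#e \<in># ?other. w \<in> e#}
      = (\<Sum>e\<in>#?other. edge_pot n (s(u := s u + s v)) (?f ` e) + (if w \<in> e then 1 else 0))"
    unfolding graph_pot_def contract_def by (simp add: multiset.map_comp comp_def sum_mset.distrib size_filter_mset_as_sum)
  also have "\<dots> \<le> graph_pot n s ?other"
    unfolding graph_pot_def using edges assms(2-4) w by (intro sum_mset_mono edge_pot_merge) auto
  finally show ?thesis by (simp add: filter_filter_mset)
qed

lemma contract_edge_subset:
  assumes "e' \<in># contract F u v" "\<forall>e\<in>#F. e \<subseteq> W \<and> card e = 2" "u \<in> W" "u \<noteq> v"
  shows "e' \<subseteq> W - {v} \<and> card e' = 2"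
proof -
  obtain e where e: "e \<in># F" "e \<noteq> {u, v}" "e' = (\<lambda>x. if x = v then u else x) ` e"
    using assms(1) unfolding contract_def by auto
  obtain a b where ab: "e = {a, b}" "a \<noteq> b" using assms(2) e(1) card_2_iff by metis
  have "e \<subseteq> W" using assms(2) e(1) by auto
  show ?thesis
  proof (cases "v \<in> e")
    case True
    then obtain c where "e = {v, c}" "c \<noteq> v" "c \<noteq> u" using ab e(2) by auto
    then show ?thesis using e(3) \<open>e \<subseteq> W\<close> assms(3,4) by auto
  next
    case False
    then show ?thesis using e(3) \<open>e \<subseteq> W\<close> ab by auto
  qed
qed

lemma contract_pot_drop:
  assumes edges: "\<forall>e\<in>#F. e \<subseteq> W \<and> card e = 2" and "u \<in> W" "v \<in> W" "u \<noteq> v"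
    and sizes: "\<forall>x\<in>W. 1 \<le> s x \<and> s x \<le> n" "s u + s v \<le> n"
    and "F' \<subseteq># contract F u v"
  shows "real (min (deg F u) (deg F v)) + graph_pot n (s(u := s u + s v)) F' \<le> graph_pot n s F"
proof -
  define w where "w = (if s u \<le> s v then u else v)"
  let ?s' = "s(u := s u + s v)"
  let ?other = "{#e \<in># F. e \<noteq> {u, v}#}" and ?uv = "{#e \<in># F. \<not> e \<noteq> {u, v}#}"
  have "graph_pot n ?s' F' \<le> graph_pot n ?s' (contract F u v)"
  proof (intro graph_pot_subset_mono ballI \<open>F' \<subseteq># _\<close>)
    fix e' assume "e' \<in># contract F u v"
    then have "e' \<subseteq> W" "card e' = 2" using contract_edge_subset edges assms(2,4) by blast+
    then have "1 \<le> edge_pot n ?s' e'"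
      using sizes assms(2) by (intro edge_pot_ge_1) (auto intro: card_ge_0_finite)
    then show "0 \<le> edge_pot n ?s' e'" by simp
  qed
  moreover have "graph_pot n ?s' (contract F u v) + size {#e \<in># F. e \<noteq> {u, v} \<and> w \<in> e#}
      \<le> graph_pot n s ?other"
    using edges sizes assms(2-4) unfolding w_def by (intro graph_pot_contract) auto
  moreover have "graph_pot n s F = graph_pot n s ?other + graph_pot n s ?uv"
    by (subst (1) multiset_partition[of F "\<lambda>e. e \<noteq> {u, v}"]) (simp only: graph_pot_union)
  moreover have "real (count F {u, v}) \<le> graph_pot n s ?uv"
  proof -
    have "real (size ?uv) \<le> graph_pot n s ?uv"
      using sizes assms(2,3) by (intro size_le_graph_pot ballI edge_pot_ge_1) auto
    then show ?thesis by (simp add: filter_eq_replicate_mset)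
  qed
  moreover have "min (deg F u) (deg F v) \<le> deg F w"
    unfolding w_def by simp
  moreover have "deg F w = size {#e \<in># F. e \<noteq> {u, v} \<and> w \<in> e#} + count F {u, v}"
    unfolding w_def by (intro deg_eq_size_other_edges_add_count) simp
  ultimately show ?thesis by linarith
qed

lemma sum_merge:
  fixes s :: "'a \<Rightarrow> 'b::comm_monoid_add"
  assumes "finite W" "u \<in> W" "v \<in> W" "u \<noteq> v"
  shows "(\<Sum>x\<in>W - {v}. (s(u := s u + s v)) x) = (\<Sum>x\<in>W. s x)"
proof -
  have "(\<Sum>x\<in>W - {v}. (s(u := s u + s v)) x) = (s u + s v) + (\<Sum>x\<in>W - {v} - {u}. s x)"
    using assms by (subst sum.remove[of _ u]) (auto intro: sum.cong)
  also have "\<dots> = s v + (s u + (\<Sum>x\<in>W - {v} - {u}. s x))"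
    by (simp add: ac_simps)
  also have "\<dots> = (\<Sum>x\<in>W. s x)"
    using assms by (simp add: sum.remove[symmetric])
  finally show ?thesis .
qed

text \<open>cluster_sizes us vs k x is the number of original vertices merged into x before the
  k-th contraction.\<close>

fun cluster_sizes :: "(nat \<Rightarrow> nat) \<Rightarrow> (nat \<Rightarrow> nat) \<Rightarrow> nat \<Rightarrow> nat \<Rightarrow> nat" where
  "cluster_sizes us vs 0 = (\<lambda>_. 1)"
| "cluster_sizes us vs (Suc 0) = (\<lambda>_. 1)"
| "cluster_sizes us vs (Suc (Suc k)) =
     (let s = cluster_sizes us vs (Suc k) in s(us (Suc k) := s (us (Suc k)) + s (vs (Suc k))))"

lemma cluster_sizes_Suc:
  assumes "1 \<le> k"
  shows "cluster_sizes us vs (Suc k) =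
           (cluster_sizes us vs k)(us k := cluster_sizes us vs k (us k) + cluster_sizes us vs k (vs k))"
  using assms by (cases k) (simp_all add: Let_def)

lemma contraction_process_invariant:
  assumes mg: "multigraph V E" and cp: "contraction_process V E VS ES us vs"
    and "1 \<le> j" "j < card V"
  shows "VS j \<subseteq> V \<and> (\<forall>e\<in>#ES j. e \<subseteq> VS j \<and> card e = 2) \<and>
         (\<forall>x\<in>VS j. 1 \<le> cluster_sizes us vs j x) \<and> (\<Sum>x\<in>VS j. cluster_sizes us vs j x) = card V"
  using assms(3,4)
proof (induction j rule: nat_induct_at_least)
  case base
  have "ES 1 \<subseteq># E" "VS 1 = V" using cp unfolding contraction_process_def by auto
  then show ?case using mg unfolding multigraph_def by (auto dest: mset_subset_eqD)
next
  case (Suc j)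
  let ?s = "cluster_sizes us vs j" and ?u = "us j" and ?v = "vs j"
  have step: "?u \<noteq> ?v" "{?u, ?v} \<in># ES j" "VS (Suc j) = VS j - {?v}"
    "ES (Suc j) \<subseteq># contract (ES j) ?u ?v"
    using cp Suc unfolding contraction_process_def by auto
  have IH: "VS j \<subseteq> V" "\<forall>e\<in>#ES j. e \<subseteq> VS j \<and> card e = 2" "\<forall>x\<in>VS j. 1 \<le> ?s x"
     "(\<Sum>x\<in>VS j. ?s x) = card V" using Suc by auto
  have "?u \<in> VS j" "?v \<in> VS j" using IH(2) step(2) by auto
  moreover have "finite (VS j)"
    using IH(1) mg finite_subset unfolding multigraph_def by auto
  moreover have "\<forall>e\<in>#ES (Suc j). e \<subseteq> VS (Suc j) \<and> card e = 2"
    using contract_edge_subset[OF _ IH(2) \<open>?u \<in> VS j\<close> step(1)] step(3,4)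
    by (auto dest: mset_subset_eqD)
  ultimately show ?case
    using IH step(1,3) sum_merge[of "VS j" ?u ?v ?s] by (auto simp: cluster_sizes_Suc[OF Suc.hyps])
qed

lemma contraction_process_step:
  assumes mg: "multigraph V E" and cp: "contraction_process V E VS ES us vs"
    and k: "k \<in> {1..<card V}" and F': "F' \<subseteq># contract (ES k) (us k) (vs k)"
  shows "real (min (deg (ES k) (us k)) (deg (ES k) (vs k)))
           + graph_pot (card V) (cluster_sizes us vs (Suc k)) F'
         \<le> graph_pot (card V) (cluster_sizes us vs k) (ES k)"
proof -
  let ?s = "cluster_sizes us vs k" and ?u = "us k" and ?v = "vs k"
  have inv: "VS k \<subseteq> V" "\<forall>e\<in>#ES k. e \<subseteq> VS k \<and> card e = 2" "\<forall>x\<in>VS k. 1 \<le> ?s x"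
     "(\<Sum>x\<in>VS k. ?s x) = card V"
    using contraction_process_invariant[OF mg cp] k by auto
  have "?u \<noteq> ?v" "{?u, ?v} \<in># ES k" using cp k unfolding contraction_process_def by auto
  then have uv: "?u \<in> VS k" "?v \<in> VS k" using inv(2) by auto
  have fin: "finite (VS k)" using inv(1) mg finite_subset unfolding multigraph_def by auto
  have "(\<Sum>x\<in>{?u, ?v}. ?s x) \<le> card V"
    using uv fin inv(4) by (metis empty_subsetI insert_subset sum_mono2 zero_le)
  then have "?s ?u + ?s ?v \<le> card V" using \<open>?u \<noteq> ?v\<close> by simp
  moreover have "\<forall>x\<in>VS k. ?s x \<le> card V"
    using fin inv(4) member_le_sum[of _ "VS k" ?s] by fastforce
  ultimately show ?thesis
    using contract_pot_drop[OF inv(2) uv \<open>?u \<noteq> ?v\<close> _ _ F'] inv(3) k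
    by (simp add: cluster_sizes_Suc)
qed

lemma contraction_process_pot_telescope:
  assumes mg: "multigraph V E" and cp: "contraction_process V E VS ES us vs"
    and "1 \<le> j" "j < card V"
  shows "(\<Sum>k = 1..<j. real (min (deg (ES k) (us k)) (deg (ES k) (vs k))))
           + graph_pot (card V) (cluster_sizes us vs j) (ES j)
         \<le> graph_pot (card V) (\<lambda>_. 1) (ES 1)"
  using assms(3,4)
proof (induction j rule: nat_induct_at_least)
  case base
  then show ?case by simp
next
  case (Suc j)
  have "j \<in> {1..<card V}" "ES (Suc j) \<subseteq># contract (ES j) (us j) (vs j)"
    using cp Suc unfolding contraction_process_def by auto
  then show ?case
    using contraction_process_step[OF mg cp] Suc by fastforce
qed

lemma contraction_process_min_deg_sum_le:
  assumes mg: "multigraph V E" and cp: "contraction_process V E VS ES us vs"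
  shows "real (\<Sum>k = 1..<card V. min (deg (ES k) (us k)) (deg (ES k) (vs k)))
           \<le> real (size E) * (1 + 2 * log 2 (real (card V)))"
proof (cases "card V \<le> 1")
  case True
  have "E = {#}" if "card V = 0"
    using mg that unfolding multigraph_def by (metis card_0_eq card_gt_0_iff multiset_nonemptyE subset_empty zero_neq_numeral)
  then show ?thesis using True by (cases "card V") auto
next
  case False
  let ?m = "\<lambda>k. real (min (deg (ES k) (us k)) (deg (ES k) (vs k)))"
  define j where "j = card V - 1"
  have j: "1 \<le> j" "j < card V" "card V = Suc j" using False unfolding j_def by auto
  have "real (\<Sum>k = 1..<card V. min (deg (ES k) (us k)) (deg (ES k) (vs k)))
      = (\<Sum>k = 1..<j. ?m k) + ?m j"
    using j by simp
  also have "\<dots> \<le> (\<Sum>k = 1..<j. ?m k) + graph_pot (card V) (cluster_sizes us vs j) (ES j)"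
    \<comment> \<open>the step bound with no edges kept after the last contraction\<close>
    using contraction_process_step[OF mg cp, of j "{#}"] j by (simp add: graph_pot_def)
  also have "\<dots> \<le> graph_pot (card V) (\<lambda>_. 1) (ES 1)"
    using contraction_process_pot_telescope[OF mg cp j(1,2)] .
  also have "\<dots> = real (size (ES 1)) * (1 + 2 * log 2 (real (card V)))"
    using contraction_process_invariant[OF mg cp, of 1] j by (intro graph_pot_const_1) auto
  also have "\<dots> \<le> real (size E) * (1 + 2 * log 2 (real (card V)))"
    using cp j unfolding contraction_process_def
    by (intro mult_right_mono) (auto intro: size_mset_mono)
  finally show ?thesis .
qed

theorem lemmaC3:
  shows "\<exists>C::real > 0. \<forall>V E VS ES us vs (\<alpha>::real) (cost::nat \<Rightarrow> real).
     multigraph V E \<and> contraction_process V E VS ES us vs \<and> \<alpha> > 0 \<and>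
     (\<forall>k \<in> {1..<card V}. cost k \<le> \<alpha> * real (min (deg (ES k) (us k)) (deg (ES k) (vs k))))
     \<longrightarrow>
       (\<Sum>k = 1..<card V. cost k) \<le> C * \<alpha> * real (size E) * ln (real (card V)) \<and>
       real (\<Sum>k = 1..<card V. min (deg (ES k) (us k)) (deg (ES k) (vs k)))
          \<le> C * real (size E) * ln (real (card V))"
proof (intro exI[of _ "3 / ln 2"] conjI allI impI)
  fix V E VS ES us vs and \<alpha> :: real and cost :: "nat \<Rightarrow> real"
  assume H: "multigraph V E \<and> contraction_process V E VS ES us vs \<and> \<alpha> > 0 \<and>
     (\<forall>k \<in> {1..<card V}. cost k \<le> \<alpha> * real (min (deg (ES k) (us k)) (deg (ES k) (vs k))))"
  let ?n = "card V" and ?m = "\<lambda>k. min (deg (ES k) (us k)) (deg (ES k) (vs k))"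
  show S: "real (\<Sum>k = 1..<?n. ?m k) \<le> 3 / ln 2 * real (size E) * ln (real ?n)"
  proof (cases "2 \<le> ?n")
    case True
    have "real (\<Sum>k = 1..<?n. ?m k) \<le> real (size E) * (1 + 2 * log 2 (real ?n))"
      using contraction_process_min_deg_sum_le H by blast
    also have "\<dots> \<le> real (size E) * (3 * log 2 (real ?n))"
      using True by (intro mult_left_mono) auto
    also have "\<dots> = 3 / ln 2 * real (size E) * ln (real ?n)"
      by (simp add: log_def)
    finally show ?thesis .
  next
    case False
    then show ?thesis by (cases ?n) auto
  qed
  have "(\<Sum>k = 1..<?n. cost k) \<le> (\<Sum>k = 1..<?n. \<alpha> * real (?m k))"
    using H by (intro sum_mono) auto
  also have "\<dots> = \<alpha> * real (\<Sum>k = 1..<?n. ?m k)"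
    by (simp add: sum_distrib_left)
  also have "\<dots> \<le> \<alpha> * (3 / ln 2 * real (size E) * ln (real ?n))"
    using S H by (intro mult_left_mono) auto
  finally show "(\<Sum>k = 1..<?n. cost k) \<le> 3 / ln 2 * \<alpha> * real (size E) * ln (real ?n)"
    by (simp add: ac_simps)
qed simp

end
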